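(* Let $K$ be a field with algebraic closure $\overline{K}$, $U=\{u_1,\dots,u_d\}$ parameters and $X=\{x_1,\dots,x_n\}$ variables ordered $u_1\prec\dots\prec u_d\prec x_1\prec\dots\prec x_n$. Let $\mathbf{P}=\{p\}$ be a parametric system in $K[U][X]$ consisting of a single polynomial $p$, let $\mathbb{S}$ be a Wu's decomposition of $\mathbf{P}$ in $K[U][X]$, and let $\mathcal{L}=\{\mathbf{C}_{l,1},\dots,\mathbf{C}_{l,k}\}$ be a line of $\mathbb{S}$. Then for every $a\in\overline{K}^d\setminus\mathrm{V}^U(\mathbf{C}_{l,k})$, $p(a)$ is not the zero polynomial of $\overline{K}[X]$.
   Context: A parametric system is a non-empty finite subset of $K[U][X]\setminus K[X]$. For $F\in K[U][X]\setminus\{0\}$, its class is the largest $p$ with $\deg(F,x_p)>0$ (0 if none); if the class is $p>0$ the main variable is $x_p$ and, writing $F=C_0x_p^m+\dots+C_m$ with $C_0\ne0$, the initial is $\mathrm{I}(F)=C_0$. A triangular set is $\{T_1,\dots,T_r\}$ with strictly increasing positive classes. A non-contradictory ascending chain is a triangular set in which each $T_i$ has degree in $\mathrm{mvar}(T_j)$ less than $\deg(T_j,\mathrm{mvar}(T_j))$ for all $j<i$; a contradictory ascending chain is $\{F\}$ with $0\ne F\in K[U]$. An ascending chain $\mathbf{C}$ is a characteristic set of $\mathbf{P}$ if $\mathbf{C}\subset\langle\mathbf{P}\rangle_{K[U][X]}$ and the successive pseudo-remainder of each element of $\mathbf{P}$ w.r.t. $\mathbf{C}$ is $0$. A Wu's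 decomposition of $\mathbf{P}$ is the finite set of ascending chains produced by Wu's method: compute a characteristic set $\mathbf{C}$ of $\mathbf{P}$; if $\mathbf{C}=\{C_1,\dots,C_t\}$ is non-contradictory, recursively apply the method to each $\mathbf{P}\cup\mathbf{C}\cup\{\mathrm{I}(C_i)\}$; all characteristic sets obtained form the decomposition. A line of a Wu's decomposition $\mathbb{S}$ of $\mathbf{P}_1$ is a subset $\{\mathbf{C}_{l,1},\dots,\mathbf{C}_{l,k}\}$ such that $\mathbf{C}_{l,1}$ is a characteristic set of $\mathbf{P}_1$; for $2\le i\le k$, $\mathbf{C}_{l,i}$ is a characteristic set of $\mathbf{P}_i=\mathbf{P}_{i-1}\cup\mathbf{C}_{l,i-1}\cup\{\mathrm{I}(C_{l,i-1})\}$ for some $C_{l,i-1}\in\mathbf{C}_{l,i-1}$; and $\mathbf{C}_{l,1},\dots,\mathbf{C}_{l,k-1}$ are non-contradictory while $\mathbf{C}_{l,k}$ is contradictory. $F(a)$ denotes substitution of $a\in\overline{K}^d$ for $U$; $\mathrm{V}^U(\mathbf{B})$ is the common zero set in $\overline{K}^d$ of $\mathbf{B}\subset K[U]$. *)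

theory Defs
  imports "HOL-Library.Poly_Mapping" "HOL-Computational_Algebra.Polynomial"
begin

text \<open>Parameter u_i (1 <= i <= d) is variable number i-1, variable x_j (1 <= j <= n)
  is variable number d+j-1.  K[U][X] is the subring of polynomials involving only
  variables of index < d+n; K[U] those of index < d; K[X] those of index in [d, d+n).\<close>

type_synonym 'a mpoly = "(nat \<Rightarrow>\<^sub>0 nat) \<Rightarrow>\<^sub>0 'a"

definition vars_in :: "nat set \<Rightarrow> 'a::zero mpoly \<Rightarrow> bool" where
  "vars_in V F \<longleftrightarrow> (\<forall>m\<in>Poly_Mapping.keys F. \<forall>i. Poly_Mapping.lookup m i > 0 \<longrightarrow> i \<in> V)"

definition in_KUX :: "nat \<Rightarrow> nat \<Rightarrow> 'a::zero mpoly \<Rightarrow> bool" where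
  "in_KUX d n F \<longleftrightarrow> vars_in {..<d+n} F"

definition in_KU :: "nat \<Rightarrow> 'a::zero mpoly \<Rightarrow> bool" where
  "in_KU d F \<longleftrightarrow> vars_in {..<d} F"

definition in_KX :: "nat \<Rightarrow> nat \<Rightarrow> 'a::zero mpoly \<Rightarrow> bool" where
  "in_KX d n F \<longleftrightarrow> vars_in {d..<d+n} F"

definition parametric_system :: "nat \<Rightarrow> nat \<Rightarrow> 'a::zero mpoly set \<Rightarrow> bool" where
  "parametric_system d n P \<longleftrightarrow> P \<noteq> {} \<and> finite P \<and> (\<forall>F\<in>P. in_KUX d n F \<and> \<not> in_KX d n F)"

definition deg_in :: "nat \<Rightarrow> 'a::zero mpoly \<Rightarrow> nat" where
  "deg_in v F = Max (insert 0 ((\<lambda>m. Poly_Mapping.lookup m v) ` Poly_Mapping.keys F))"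

definition cls :: "nat \<Rightarrow> nat \<Rightarrow> 'a::zero mpoly \<Rightarrow> nat" where
  "cls d n F = (if \<exists>p\<in>{1..n}. deg_in (d + p - 1) F > 0
                then Max {p\<in>{1..n}. deg_in (d + p - 1) F > 0} else 0)"

definition mvar :: "nat \<Rightarrow> nat \<Rightarrow> 'a::zero mpoly \<Rightarrow> nat" where
  "mvar d n F = d + cls d n F - 1"

definition lcoeff_in :: "nat \<Rightarrow> 'a::zero mpoly \<Rightarrow> 'a mpoly" where
  "lcoeff_in v F = Abs_poly_mapping
     (\<lambda>m. if Poly_Mapping.lookup m v = 0 then Poly_Mapping.lookup F (m + Poly_Mapping.single v (deg_in v F)) else 0)"

definition initial :: "nat \<Rightarrow> nat \<Rightarrow> 'a::zero mpoly \<Rightarrow> 'a mpoly" where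
  "initial d n F = lcoeff_in (mvar d n F) F"

definition prem_in :: "nat \<Rightarrow> 'a::comm_ring_1 mpoly \<Rightarrow> 'a mpoly \<Rightarrow> 'a mpoly" where
  "prem_in v F G = (THE R. deg_in v R < deg_in v G \<and>
      (\<exists>Q. lcoeff_in v G ^ (deg_in v F + 1 - deg_in v G) * F = Q * G + R))"

text \<open>Pseudo-remainder of F by an element G of an ascending chain: w.r.t. the main
  variable of G; if G has class 0 (contradictory chain, G in K[U] nonzero) the remainder is 0.\<close>
definition prem :: "nat \<Rightarrow> nat \<Rightarrow> 'a::comm_ring_1 mpoly \<Rightarrow> 'a mpoly \<Rightarrow> 'a mpoly" where
  "prem d n F G = (if cls d n G = 0 then 0 else prem_in (mvar d n G) F G)"

text \<open>Chains are represented as lists ordered by increasing class.  Successive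
  pseudo-remainder: first w.r.t. the last element, ..., finally w.r.t. the first.\<close>
definition sprem :: "nat \<Rightarrow> nat \<Rightarrow> 'a::comm_ring_1 mpoly \<Rightarrow> 'a mpoly list \<Rightarrow> 'a mpoly" where
  "sprem d n F C = foldr (\<lambda>G R. prem d n R G) C F"

definition triangular_set :: "nat \<Rightarrow> nat \<Rightarrow> 'a::zero mpoly list \<Rightarrow> bool" where
  "triangular_set d n C \<longleftrightarrow> (\<forall>T\<in>set C. in_KUX d n T \<and> cls d n T > 0) \<and>
     sorted_wrt (\<lambda>S T. cls d n S < cls d n T) C"

definition noncontra_chain :: "nat \<Rightarrow> nat \<Rightarrow> 'a::zero mpoly list \<Rightarrow> bool" where
  "noncontra_chain d n C \<longleftrightarrow> triangular_set d n C \<and>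
     (\<forall>i<length C. \<forall>j<i. deg_in (mvar d n (C!j)) (C!i) < deg_in (mvar d n (C!j)) (C!j))"

definition contra_chain :: "nat \<Rightarrow> 'a::zero mpoly list \<Rightarrow> bool" where
  "contra_chain d C \<longleftrightarrow> (\<exists>F. C = [F] \<and> F \<noteq> 0 \<and> in_KU d F)"

definition asc_chain :: "nat \<Rightarrow> nat \<Rightarrow> 'a::zero mpoly list \<Rightarrow> bool" where
  "asc_chain d n C \<longleftrightarrow> noncontra_chain d n C \<or> contra_chain d C"

definition ideal_gen :: "'a::comm_ring_1 mpoly set \<Rightarrow> 'a mpoly set" where
  "ideal_gen P = {F. \<exists>Q f. finite Q \<and> Q \<subseteq> P \<and> F = (\<Sum>q\<in>Q. f q * q)}"

definition char_set :: "nat \<Rightarrow> nat \<Rightarrow> 'a::comm_ring_1 mpoly list \<Rightarrow> 'a mpoly set \<Rightarrow> bool" where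
  "char_set d n C P \<longleftrightarrow> asc_chain d n C \<and> set C \<subseteq> ideal_gen P \<and>
     (\<forall>F\<in>P. sprem d n F C = 0)"

text \<open>Systems reached by Wu's method from P, where cs is the procedure choosing a
  characteristic set for each system.\<close>
inductive wu_reached :: "nat \<Rightarrow> nat \<Rightarrow> ('a::comm_ring_1 mpoly set \<Rightarrow> 'a mpoly list)
    \<Rightarrow> 'a mpoly set \<Rightarrow> 'a mpoly set \<Rightarrow> bool"
  for d n cs P where
  start: "wu_reached d n cs P P"
| step: "wu_reached d n cs P Q \<Longrightarrow> noncontra_chain d n (cs Q) \<Longrightarrow> c \<in> set (cs Q) \<Longrightarrow>
         wu_reached d n cs P (Q \<union> set (cs Q) \<union> {initial d n c})"

definition wu_decomposition :: "nat \<Rightarrow> nat \<Rightarrow> 'a::comm_ring_1 mpoly set \<Rightarrow> 'a mpoly list set \<Rightarrow> bool" where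
  "wu_decomposition d n P S \<longleftrightarrow> finite S \<and> (\<exists>cs.
     (\<forall>Q. wu_reached d n cs P Q \<longrightarrow> char_set d n (cs Q) Q) \<and>
     S = {cs Q | Q. wu_reached d n cs P Q})"

definition wu_line :: "nat \<Rightarrow> nat \<Rightarrow> 'a::comm_ring_1 mpoly set \<Rightarrow> 'a mpoly list set
    \<Rightarrow> 'a mpoly list list \<Rightarrow> bool" where
  "wu_line d n P S L \<longleftrightarrow> L \<noteq> [] \<and> set L \<subseteq> S \<and>
     (\<exists>Ps. length Ps = length L \<and> Ps ! 0 = P \<and>
        (\<forall>i<length L. char_set d n (L!i) (Ps!i)) \<and>
        (\<forall>i. Suc i < length L \<longrightarrow> (\<exists>c\<in>set (L!i).
              Ps ! Suc i = Ps ! i \<union> set (L!i) \<union> {initial d n c})) \<and>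
        (\<forall>i. Suc i < length L \<longrightarrow> noncontra_chain d n (L!i)) \<and>
        contra_chain d (last L))"

definition field_hom :: "('a::field \<Rightarrow> 'b::field) \<Rightarrow> bool" where
  "field_hom \<phi> \<longleftrightarrow> \<phi> 1 = 1 \<and> (\<forall>x y. \<phi> (x + y) = \<phi> x + \<phi> y) \<and> (\<forall>x y. \<phi> (x * y) = \<phi> x * \<phi> y)"

definition is_alg_closure :: "('a::field \<Rightarrow> 'b::alg_closed_field) \<Rightarrow> bool" where
  "is_alg_closure \<phi> \<longleftrightarrow> field_hom \<phi> \<and>
     (\<forall>b. \<exists>q :: 'a poly. q \<noteq> 0 \<and> poly (map_poly \<phi> q) b = 0)"

text \<open>F(a) for F in K[U][X] and a in Kbar^d (coordinates a 0, ..., a (d-1)):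
  the polynomial in Kbar[X] obtained by substituting a_i for u_i.\<close>
definition subst_params :: "nat \<Rightarrow> ('a::field \<Rightarrow> 'b::field) \<Rightarrow> (nat \<Rightarrow> 'b) \<Rightarrow> 'a mpoly \<Rightarrow> 'b mpoly" where
  "subst_params d \<phi> a F = Abs_poly_mapping (\<lambda>mx.
     if (\<forall>i<d. Poly_Mapping.lookup mx i = 0) then
       (\<Sum>m\<in>{m\<in>Poly_Mapping.keys F. \<forall>i. d \<le> i \<longrightarrow> Poly_Mapping.lookup m i = Poly_Mapping.lookup mx i}.
           \<phi> (Poly_Mapping.lookup F m) * (\<Prod>i<d. a i ^ Poly_Mapping.lookup m i))
     else 0)"

definition eval_params :: "nat \<Rightarrow> ('a::field \<Rightarrow> 'b::field) \<Rightarrow> (nat \<Rightarrow> 'b) \<Rightarrow> 'a mpoly \<Rightarrow> 'b" where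
  "eval_params d \<phi> a F = (\<Sum>m\<in>Poly_Mapping.keys F. \<phi> (Poly_Mapping.lookup F m) * (\<Prod>i<d. a i ^ Poly_Mapping.lookup m i))"

text \<open>V^U(B): common zeros in Kbar^d (points a with a i = 0 for i >= d, as canonical
  representatives of d-tuples).\<close>
definition zero_set_U :: "nat \<Rightarrow> ('a::field \<Rightarrow> 'b::field) \<Rightarrow> 'a mpoly set \<Rightarrow> (nat \<Rightarrow> 'b) set" where
  "zero_set_U d \<phi> B = {a. (\<forall>i\<ge>d. a i = 0) \<and> (\<forall>F\<in>B. eval_params d \<phi> a F = 0)}"

definition points_U :: "nat \<Rightarrow> (nat \<Rightarrow> 'b::zero) set" where
  "points_U d = {a. \<forall>i\<ge>d. a i = 0}"

end

theory Submission
  imports Defs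
begin

text \<open>Specializing the parameters, F \<mapsto> F(a), is a ring homomorphism from K[U][X] to
  Kbar[X].  Suppose p(a) = 0.  Then every polynomial in the ideal generated by a system
  that vanishes at a vanishes as well, and so does the initial of every chain element of
  positive class: its specialization collects the coefficients of F(a) at those monomials
  that contain the main variable to the top degree.  By induction along the line, every
  system P_i vanishes at a, hence so does the element of the final contradictory chain
  C_{l,k} \<subseteq> K[U], i.e. a \<in> V^U(C_{l,k}).\<close>

definition clear_params :: "nat \<Rightarrow> (nat \<Rightarrow>\<^sub>0 nat) \<Rightarrow> (nat \<Rightarrow>\<^sub>0 nat)" where
  "clear_params d m = Abs_poly_mapping (\<lambda>i. if d \<le> i then Poly_Mapping.lookup m i else 0)"

lemma lookup_clear_params:
  "Poly_Mapping.lookup (clear_params d m) i = (if d \<le> i then Poly_Mapping.lookup m i else 0)"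
proof -
  have "finite {i. (if d \<le> i then Poly_Mapping.lookup m i else 0) \<noteq> 0}"
    by (rule finite_subset[OF _ finite_lookup[of m]]) auto
  then show ?thesis unfolding clear_params_def by simp
qed

lemma clear_params_add: "clear_params d (m + m') = clear_params d m + clear_params d m'"
  by (rule poly_mapping_eqI) (simp add: lookup_clear_params lookup_add)

lemma clear_params_eq_iff:
  "clear_params d m = mx \<longleftrightarrow> (\<forall>i<d. Poly_Mapping.lookup mx i = 0) \<and>
     (\<forall>i. d \<le> i \<longrightarrow> Poly_Mapping.lookup m i = Poly_Mapping.lookup mx i)"
proof
  assume "clear_params d m = mx"
  then have "Poly_Mapping.lookup mx i = (if d \<le> i then Poly_Mapping.lookup m i else 0)" for i
    using lookup_clear_params by metis
  then show "(\<forall>i<d. Poly_Mapping.lookup mx i = 0) \<and>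
     (\<forall>i. d \<le> i \<longrightarrow> Poly_Mapping.lookup m i = Poly_Mapping.lookup mx i)"
    by simp
next
  assume "(\<forall>i<d. Poly_Mapping.lookup mx i = 0) \<and>
     (\<forall>i. d \<le> i \<longrightarrow> Poly_Mapping.lookup m i = Poly_Mapping.lookup mx i)"
  then show "clear_params d m = mx"
    by (intro poly_mapping_eqI) (simp add: lookup_clear_params not_le)
qed

definition param_monomial :: "nat \<Rightarrow> (nat \<Rightarrow> 'b::field) \<Rightarrow> (nat \<Rightarrow>\<^sub>0 nat) \<Rightarrow> 'b" where
  "param_monomial d a m = (\<Prod>i<d. a i ^ Poly_Mapping.lookup m i)"

lemma param_monomial_add:
  "param_monomial d a (m + m') = param_monomial d a m * param_monomial d a m'"
  by (simp add: param_monomial_def lookup_add power_add prod.distrib)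

lemma field_hom_0: "field_hom \<phi> \<Longrightarrow> \<phi> 0 = 0"
  unfolding field_hom_def by (metis add_cancel_right_right add_0)

lemma subst_params_eq_sum:
  "subst_params d \<phi> a F = (\<Sum>m\<in>Poly_Mapping.keys F.
     Poly_Mapping.single (clear_params d m) (\<phi> (Poly_Mapping.lookup F m) * param_monomial d a m))"
  (is "_ = ?G")
proof -
  have "(\<lambda>mx. if \<forall>i<d. Poly_Mapping.lookup mx i = 0 then
       (\<Sum>m\<in>{m\<in>Poly_Mapping.keys F. \<forall>i. d \<le> i \<longrightarrow> Poly_Mapping.lookup m i = Poly_Mapping.lookup mx i}.
           \<phi> (Poly_Mapping.lookup F m) * (\<Prod>i<d. a i ^ Poly_Mapping.lookup m i))
     else 0) = Poly_Mapping.lookup ?G" (is "?f = _")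
  proof
    fix mx
    show "?f mx = Poly_Mapping.lookup ?G mx"
    proof (cases "\<forall>i<d. Poly_Mapping.lookup mx i = 0")
      case True
      then show ?thesis
        unfolding lookup_sum lookup_single when_def clear_params_eq_iff
        by (simp add: sum.inter_filter[symmetric] param_monomial_def)
    next
      case False
      then have "{m \<in> Poly_Mapping.keys F. clear_params d m = mx} = {}"
        by (auto simp: clear_params_eq_iff)
      then show ?thesis
        unfolding if_not_P[OF False] by (simp add: lookup_sum lookup_single when_def sum.inter_filter)
    qed
  qed
  then show ?thesis unfolding subst_params_def by simp
qed

lemma subst_params_eq_sum_over:
  assumes "field_hom \<phi>" "finite M" "Poly_Mapping.keys F \<subseteq> M"
  shows "subst_params d \<phi> a F = (\<Sum>m\<in>M.
     Poly_Mapping.single (clear_params d m) (\<phi> (Poly_Mapping.lookup F m) * param_monomial d a m))"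
  unfolding subst_params_eq_sum
  by (rule sum.mono_neutral_left[OF assms(2,3)]) (auto simp: field_hom_0[OF assms(1)] in_keys_iff)

lemma lookup_subst_params:
  "Poly_Mapping.lookup (subst_params d \<phi> a F) mx =
     (\<Sum>m\<in>{m\<in>Poly_Mapping.keys F. clear_params d m = mx}.
        \<phi> (Poly_Mapping.lookup F m) * param_monomial d a m)"
  by (simp add: subst_params_eq_sum lookup_sum lookup_single when_def sum.inter_filter)

lemma subst_params_0: "subst_params d \<phi> a 0 = 0"
  by (simp add: subst_params_eq_sum)

lemma subst_params_add:
  assumes "field_hom \<phi>"
  shows "subst_params d \<phi> a (F + G) = subst_params d \<phi> a F + subst_params d \<phi> a G"
proof -
  let ?M = "Poly_Mapping.keys F \<union> Poly_Mapping.keys G"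
  have "finite ?M" "Poly_Mapping.keys (F + G) \<subseteq> ?M"
    using keys_add[of F G] by auto
  then show ?thesis
    using assms unfolding field_hom_def
    by (simp add: subst_params_eq_sum_over[OF assms, of ?M] lookup_add distrib_right
        single_add sum.distrib)
qed

lemma subst_params_sum:
  assumes "field_hom \<phi>"
  shows "subst_params d \<phi> a (\<Sum>i\<in>I. f i) = (\<Sum>i\<in>I. subst_params d \<phi> a (f i))"
  by (induction I rule: infinite_finite_induct) (auto simp: subst_params_0 subst_params_add[OF assms])

lemma subst_params_single:
  assumes "field_hom \<phi>"
  shows "subst_params d \<phi> a (Poly_Mapping.single m c) =
    Poly_Mapping.single (clear_params d m) (\<phi> c * param_monomial d a m)"
  using subst_params_eq_sum_over[OF assms, of "{m}" "Poly_Mapping.single m c"] by simp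

lemma poly_mapping_sum_single_keys:
  "F = (\<Sum>m\<in>Poly_Mapping.keys F. Poly_Mapping.single m (Poly_Mapping.lookup F m))"
  by (rule poly_mapping_eqI) (simp add: lookup_sum lookup_single when_def in_keys_iff)

lemma subst_params_mult:
  assumes "field_hom \<phi>"
  shows "subst_params d \<phi> a (F * G) = subst_params d \<phi> a F * subst_params d \<phi> a G"
proof -
  have "F * G = (\<Sum>m\<in>Poly_Mapping.keys F. \<Sum>m'\<in>Poly_Mapping.keys G.
      Poly_Mapping.single (m + m') (Poly_Mapping.lookup F m * Poly_Mapping.lookup G m'))"
    by (subst poly_mapping_sum_single_keys[of F], subst poly_mapping_sum_single_keys[of G])
      (simp add: sum_product mult_single)
  then have "subst_params d \<phi> a (F * G) = (\<Sum>m\<in>Poly_Mapping.keys F. \<Sum>m'\<in>Poly_Mapping.keys G.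
      Poly_Mapping.single (clear_params d m + clear_params d m')
        (\<phi> (Poly_Mapping.lookup F m) * param_monomial d a m *
         (\<phi> (Poly_Mapping.lookup G m') * param_monomial d a m')))"
    using assms unfolding field_hom_def
    by (simp add: subst_params_sum[OF assms] subst_params_single[OF assms]
        clear_params_add param_monomial_add mult_ac)
  also have "\<dots> = subst_params d \<phi> a F * subst_params d \<phi> a G"
    by (simp add: subst_params_eq_sum sum_product mult_single)
  finally show ?thesis .
qed

lemma subst_params_ideal_gen:
  assumes "field_hom \<phi>" "\<forall>q\<in>P. subst_params d \<phi> a q = 0" "F \<in> ideal_gen P"
  shows "subst_params d \<phi> a F = 0"
proof -
  obtain Q f where "finite Q" "Q \<subseteq> P" "F = (\<Sum>q\<in>Q. f q * q)"
    using assms(3) unfolding ideal_gen_def by blast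
  then show ?thesis
    using assms(2)
    by (auto simp: subst_params_sum[OF assms(1)] subst_params_mult[OF assms(1)] intro!: sum.neutral)
qed

lemma lookup_subst_params_0_KU:
  assumes "in_KU d F"
  shows "Poly_Mapping.lookup (subst_params d \<phi> a F) 0 = eval_params d \<phi> a F"
proof -
  have "clear_params d m = 0" if "m \<in> Poly_Mapping.keys F" for m
  proof (rule poly_mapping_eqI)
    fix i
    have "Poly_Mapping.lookup m i > 0 \<longrightarrow> i < d"
      using assms that unfolding in_KU_def vars_in_def by auto
    then show "Poly_Mapping.lookup (clear_params d m) i = Poly_Mapping.lookup 0 i"
      by (auto simp: lookup_clear_params)
  qed
  then have "{m \<in> Poly_Mapping.keys F. clear_params d m = 0} = Poly_Mapping.keys F"
    by blast
  then show ?thesis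
    by (simp add: lookup_subst_params eval_params_def param_monomial_def)
qed

lemma lookup_lcoeff_in:
  "Poly_Mapping.lookup (lcoeff_in v F) m =
     (if Poly_Mapping.lookup m v = 0
      then Poly_Mapping.lookup F (m + Poly_Mapping.single v (deg_in v F)) else 0)"
proof -
  let ?s = "Poly_Mapping.single v (deg_in v F)"
  have "{m. Poly_Mapping.lookup F (m + ?s) \<noteq> 0} = (\<lambda>m. m + ?s) -` Poly_Mapping.keys F"
    by (auto simp: in_keys_iff)
  then have "finite {m. Poly_Mapping.lookup F (m + ?s) \<noteq> 0}"
    by (simp add: finite_vimageI inj_on_def)
  then have "finite {m. (if Poly_Mapping.lookup m v = 0 then Poly_Mapping.lookup F (m + ?s) else 0) \<noteq> 0}"
    by (rule finite_subset[rotated]) auto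
  then show ?thesis unfolding lcoeff_in_def by simp
qed

lemma clear_params_add_single:
  "d \<le> v \<Longrightarrow> clear_params d (m + Poly_Mapping.single v k) = clear_params d m + Poly_Mapping.single v k"
  by (intro poly_mapping_eqI) (simp add: lookup_clear_params lookup_add lookup_single when_def)

lemma param_monomial_add_single:
  "d \<le> v \<Longrightarrow> param_monomial d a (m + Poly_Mapping.single v k) = param_monomial d a m"
  by (simp add: param_monomial_def lookup_add lookup_single when_def)

lemma lookup_subst_params_lcoeff_in:
  assumes "d \<le> v"
  shows "Poly_Mapping.lookup (subst_params d \<phi> a (lcoeff_in v F)) mx =
    (if Poly_Mapping.lookup mx v = 0
     then Poly_Mapping.lookup (subst_params d \<phi> a F) (mx + Poly_Mapping.single v (deg_in v F)) else 0)"
proof -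
  define s where "s = Poly_Mapping.single v (deg_in v F)"
  have lookup_s: "Poly_Mapping.lookup s i = (if i = v then deg_in v F else 0)" for i
    by (simp add: s_def lookup_single when_def)
  have keys_lcoeff: "m \<in> Poly_Mapping.keys (lcoeff_in v F) \<longleftrightarrow>
      Poly_Mapping.lookup m v = 0 \<and> m + s \<in> Poly_Mapping.keys F" for m
    by (simp add: in_keys_iff lookup_lcoeff_in s_def)
  have lookup_clear: "Poly_Mapping.lookup (clear_params d m) v = Poly_Mapping.lookup m v" for m
    using assms by (simp add: lookup_clear_params)
  show ?thesis
  proof (cases "Poly_Mapping.lookup mx v = 0")
    case True
    have shift: "clear_params d (m + s) = clear_params d m + s" for m
      using clear_params_add_single[OF assms] by (simp add: s_def)
    have "(\<Sum>m\<in>{m \<in> Poly_Mapping.keys (lcoeff_in v F). clear_params d m = mx}.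
            \<phi> (Poly_Mapping.lookup (lcoeff_in v F) m) * param_monomial d a m) =
          (\<Sum>k\<in>{k \<in> Poly_Mapping.keys F. clear_params d k = mx + s}.
            \<phi> (Poly_Mapping.lookup F k) * param_monomial d a k)"
    proof (rule sum.reindex_bij_witness[of _ "\<lambda>k. k - s" "\<lambda>m. m + s"])
      fix m assume m: "m \<in> {m \<in> Poly_Mapping.keys (lcoeff_in v F). clear_params d m = mx}"
      show "m + s - s = m"
        by (intro poly_mapping_eqI) (simp add: lookup_add lookup_minus)
      show "m + s \<in> {k \<in> Poly_Mapping.keys F. clear_params d k = mx + s}"
        using m by (simp add: keys_lcoeff shift)
      show "\<phi> (Poly_Mapping.lookup F (m + s)) * param_monomial d a (m + s) =
          \<phi> (Poly_Mapping.lookup (lcoeff_in v F) m) * param_monomial d a m"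
        using m by (simp add: keys_lcoeff lookup_lcoeff_in s_def param_monomial_add_single[OF assms])
    next
      fix k assume k: "k \<in> {k \<in> Poly_Mapping.keys F. clear_params d k = mx + s}"
      then have "Poly_Mapping.lookup k v = deg_in v F"
        using True lookup_clear[of k] by (simp add: lookup_add lookup_s)
      then have restore: "k - s + s = k" and "Poly_Mapping.lookup (k - s) v = 0"
        by (auto intro!: poly_mapping_eqI simp: lookup_add lookup_minus lookup_s)
      show "k - s + s = k" by (fact restore)
      have "clear_params d (k - s) + s = mx + s"
        using k by (simp add: shift[symmetric] restore)
      then show "k - s \<in> {m \<in> Poly_Mapping.keys (lcoeff_in v F). clear_params d m = mx}"
        using k \<open>Poly_Mapping.lookup (k - s) v = 0\<close> by (simp add: keys_lcoeff restore)
    qed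
    then show ?thesis
      using True by (simp add: lookup_subst_params s_def)
  next
    case False
    have no_terms: "{m \<in> Poly_Mapping.keys (lcoeff_in v F). clear_params d m = mx} = {}"
      using False lookup_clear by (auto simp: keys_lcoeff)
    show ?thesis
      unfolding lookup_subst_params no_terms using False by simp
  qed
qed

lemma subst_params_initial:
  assumes "cls d n F > 0" "subst_params d \<phi> a F = 0"
  shows "subst_params d \<phi> a (initial d n F) = 0"
proof -
  have "d \<le> mvar d n F"
    using assms(1) by (simp add: mvar_def)
  then show ?thesis
    using assms(2) by (intro poly_mapping_eqI) (simp add: initial_def lookup_subst_params_lcoeff_in)
qed

lemma subst_params_wu_step:
  assumes "field_hom \<phi>" "\<forall>q\<in>P. subst_params d \<phi> a q = 0" "char_set d n C P"
    and "noncontra_chain d n C" "c \<in> set C"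
  shows "\<forall>q \<in> P \<union> set C \<union> {initial d n c}. subst_params d \<phi> a q = 0"
proof -
  have chain: "\<forall>q\<in>set C. subst_params d \<phi> a q = 0"
    using assms(3) subst_params_ideal_gen[OF assms(1,2)] unfolding char_set_def by blast
  moreover have "cls d n c > 0"
    using assms(4,5) unfolding noncontra_chain_def triangular_set_def by blast
  ultimately have "subst_params d \<phi> a (initial d n c) = 0"
    using assms(5) subst_params_initial by blast
  with assms(2) chain show ?thesis by blast
qed

lemma subst_params_wu_line_last:
  assumes "field_hom \<phi>" "wu_line d n P S L" "\<forall>q\<in>P. subst_params d \<phi> a q = 0"
  shows "\<forall>q\<in>set (last L). subst_params d \<phi> a q = 0"
proof -
  obtain Ps where "L \<noteq> []" and P0: "Ps ! 0 = P"
    and char: "\<forall>i<length L. char_set d n (L!i) (Ps!i)"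
    and next_system: "\<forall>i. Suc i < length L \<longrightarrow>
        (\<exists>c\<in>set (L!i). Ps ! Suc i = Ps ! i \<union> set (L!i) \<union> {initial d n c})"
    and noncontra: "\<forall>i. Suc i < length L \<longrightarrow> noncontra_chain d n (L!i)"
    using assms(2) unfolding wu_line_def by blast
  have systems: "\<forall>q\<in>Ps!i. subst_params d \<phi> a q = 0" if "i < length L" for i
    using that
  proof (induction i)
    case 0
    then show ?case using assms(3) P0 by simp
  next
    case (Suc i)
    obtain c where c: "c \<in> set (L!i)"
      and Ps_Suc: "Ps ! Suc i = Ps ! i \<union> set (L!i) \<union> {initial d n c}"
      using next_system Suc.prems by blast
    have IH: "\<forall>q\<in>Ps!i. subst_params d \<phi> a q = 0"
      using Suc by simp
    have "char_set d n (L!i) (Ps!i)" "noncontra_chain d n (L!i)"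
      using char noncontra Suc.prems by auto
    from subst_params_wu_step[OF assms(1) IH this c] show ?case
      unfolding Ps_Suc .
  qed
  have last: "length L - 1 < length L" "last L = L ! (length L - 1)"
    using \<open>L \<noteq> []\<close> by (auto simp: last_conv_nth)
  then have "set (last L) \<subseteq> ideal_gen (Ps ! (length L - 1))"
    using char unfolding char_set_def by metis
  then show ?thesis
    using subst_params_ideal_gen[OF assms(1) systems[OF last(1)]] by blast
qed

theorem corollary1:
  fixes d n :: nat
    and p :: "'a::field mpoly"
    and \<phi> :: "'a \<Rightarrow> 'b::alg_closed_field"
    and S :: "'a mpoly list set"
    and L :: "'a mpoly list list"
  assumes "is_alg_closure \<phi>"
    and "parametric_system d n {p}"
    and "wu_decomposition d n {p} S"
    and "wu_line d n {p} S L"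
  shows "\<forall>a \<in> points_U d - zero_set_U d \<phi> (set (last L)). subst_params d \<phi> a p \<noteq> 0"
proof (intro ballI notI)
  fix a assume a: "a \<in> points_U d - zero_set_U d \<phi> (set (last L))"
    and p_vanishes: "subst_params d \<phi> a p = 0"
  have "field_hom \<phi>"
    using assms(1) unfolding is_alg_closure_def by blast
  obtain F where F: "last L = [F]" "in_KU d F"
    using assms(4) unfolding wu_line_def contra_chain_def by blast
  have "subst_params d \<phi> a F = 0"
    using subst_params_wu_line_last[OF \<open>field_hom \<phi>\<close> assms(4)] p_vanishes F(1) by simp
  then have "eval_params d \<phi> a F = 0"
    using lookup_subst_params_0_KU[OF F(2), of \<phi> a] by simp
  then show False
    using a F(1) unfolding zero_set_U_def points_U_def by auto
qed

end
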